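(* Consider running GD-$k$ with rate $r=\frac{1}{\gamma k^2}$ on an instance $\sigma$ of $k$-MPMD with $m$ requests on an $H$-metric space $(\chi,d_H)$ with parameter $\gamma$, and let $\mathcal M=\{M_1,\ldots,M_p\}$ be the output perfect $k$-way matching, $M_\ell=\{v_{\ell,1},\ldots,v_{\ell,k}\}$. Let $T$ be the time at which all requests are matched. Then the total distance cost satisfies $$\sum_{\ell=1}^p d_H(\mathrm{pos}(v_{\ell,1}),\ldots,\mathrm{pos}(v_{\ell,k}))\le 4\gamma mk\sum_{S\subseteq V}\mathrm{sur}(S)(k-\mathrm{sur}(S))\,y_S(T)\le 4\gamma mk\,\mathcal D'(\sigma),$$ where $\mathcal D'(\sigma)$ is the optimal value of $(\mathcal D')$.
   Context: $k\ge2$. An $H$-metric with parameter $\gamma$ (integer, $1\le\gamma\le k-1$) is a map $d_H:\chi^k\to[0,\infty)$ that is invariant under permutation of its arguments, is zero iff all arguments are equal, satisfies $d_H(p_1,\ldots,p_k)\le d_H(p_1,\ldots,p_i,a,\ldots,a)+d_H(a,\ldots,a,p_{i+1},\ldots,p_k)$ for all $p_j,a\in\chi$ and $i\in\{1,\dots,k\}$ (with $k-i$, resp. $i$, copies of $a$), and satisfies: $d_H(p)\le d_H(p')$ whenever the set of distinct entries of $p$ is a proper subset of that of $p'$, and $d_H(p)\le\gamma d_H(p')$ whenever these sets are equal. An instance is $\sigma=(V,\mathrm{atime},\mathrm{pos})$ with $V=\{u_1,\ldots,u_m\}$ ($m$ a multiple of $k$), nondecreasing arrival times $\mathrm{atime}:V\to\mathbb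 R_{\ge0}$ and positions $\mathrm{pos}:V\to\chi$. The metric $d$ on $\chi$ is $d(p,q):=d_H(p,q,\ldots,q)+d_H(q,p,\ldots,p)$ (first argument once, second $k-1$ times); $E$ is the set of unordered pairs of distinct requests, $\mathrm{opt\text{-}cost}(\{u,w\}):=d(\mathrm{pos}(u),\mathrm{pos}(w))+|\mathrm{atime}(u)-\mathrm{atime}(w)|$; for $S\subseteq V$, $\mathrm{sur}(S):=|S|\bmod k$ and $\delta(S)$ is the set of pairs with exactly one element in $S$. The LP $(\mathcal D')$ is: maximize $\sum_{S\subseteq V}\mathrm{sur}(S)(k-\mathrm{sur}(S))y_S$ subject to $\sum_{S:e\in\delta(S)}y_S\le\frac{1}{\gamma k^2}\mathrm{opt\text{-}cost}(e)$ for all $e\in E$ and $y_S\ge0$ for all $S\subseteq V$. Algorithm GD-$k$ (Greedy Dual for $k$-MPMD) runs in continuous time from $0$. It maintains: a partition of the already-arrived requests into "active sets" ($A(v)$ denotes the active set containing $v$); a family $\mathcal M$ of disjoint $k$-element sets of requests (the groups matched so far); a request is free if it lies in no set of $\mathcal M$, and $\mathrm{free}(S)$ is the set of free requests of $S$; and dual values $y_S(\tau)\ge0$ for $S\subseteq V$, all initially $0$. When a request $v$ arrives, $A(v):=\{v\}$ is created. At every moment, for each active set $S$ with $\mathrm{free}(S)\ne\emptyset$, $y_S$ increases continuously at rate $r$; all other $y_S$ stay constant. Whenever a pair $e=\{u,w\}$ of arrived requests with $A(u)\ne A(w)$ becomes tight, i.e. $\sum_{S:e\in\delta(S)}y_S=\frac{1}{\gamma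 k^2}\mathrm{opt\text{-}cost}(e)$, the algorithm replaces $A(u)$ and $A(w)$ by the single active set $S=A(u)\cup A(w)$, marks $e$, and, while $|\mathrm{free}(S)|\ge k$, chooses arbitrarily $k$ free requests of $S$ and adds them as a group to $\mathcal M$ (they are matched at the current time). *)

theory Defs
  imports Complex_Main "HOL-Library.Multiset"
begin

definition hmetric :: "nat \<Rightarrow> nat \<Rightarrow> ('x list \<Rightarrow> real) \<Rightarrow> bool" where
  "hmetric k \<gamma> dH \<longleftrightarrow>
     (\<forall>p. length p = k \<longrightarrow> 0 \<le> dH p) \<and>
     (\<forall>p q. length p = k \<longrightarrow> mset q = mset p \<longrightarrow> dH q = dH p) \<and>
     (\<forall>p. length p = k \<longrightarrow> (dH p = 0 \<longleftrightarrow> (\<forall>i<k. \<forall>j<k. p ! i = p ! j))) \<and>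
     (\<forall>p a i. length p = k \<longrightarrow> 1 \<le> i \<longrightarrow> i \<le> k \<longrightarrow>
        dH p \<le> dH (take i p @ replicate (k - i) a) + dH (replicate i a @ drop i p)) \<and>
     (\<forall>p p'. length p = k \<longrightarrow> length p' = k \<longrightarrow> set p \<subset> set p' \<longrightarrow> dH p \<le> dH p') \<and>
     (\<forall>p p'. length p = k \<longrightarrow> length p' = k \<longrightarrow> set p = set p' \<longrightarrow> dH p \<le> real \<gamma> * dH p')"

definition hdist :: "nat \<Rightarrow> ('x list \<Rightarrow> real) \<Rightarrow> 'x \<Rightarrow> 'x \<Rightarrow> real" where
  "hdist k dH p q = dH (p # replicate (k - 1) q) + dH (q # replicate (k - 1) p)"

definition opt_cost :: "nat \<Rightarrow> ('x list \<Rightarrow> real) \<Rightarrow> ('v \<Rightarrow> real) \<Rightarrow> ('v \<Rightarrow> 'x) \<Rightarrow> 'v \<Rightarrow> 'v \<Rightarrow> real" where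
  "opt_cost k dH atime pos u w = hdist k dH (pos u) (pos w) + \<bar>atime u - atime w\<bar>"

text \<open>Distance cost of a group (a finite set of requests), via any enumeration of it.\<close>
definition gcost :: "('x list \<Rightarrow> real) \<Rightarrow> ('v \<Rightarrow> 'x) \<Rightarrow> 'v set \<Rightarrow> real" where
  "gcost dH pos G = dH (map pos (SOME xs. distinct xs \<and> set xs = G))"

definition edges :: "'v set \<Rightarrow> 'v set set" where
  "edges V = {{u, w} | u w. u \<in> V \<and> w \<in> V \<and> u \<noteq> w}"

definition delta :: "'v set \<Rightarrow> 'v set \<Rightarrow> 'v set set" where
  "delta V S = {e \<in> edges V. card (e \<inter> S) = 1}"

definition sur :: "nat \<Rightarrow> 'v set \<Rightarrow> nat" where
  "sur k S = card S mod k"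

definition dual_obj :: "nat \<Rightarrow> 'v set \<Rightarrow> ('v set \<Rightarrow> real) \<Rightarrow> real" where
  "dual_obj k V y = (\<Sum>S\<in>Pow V. real (sur k S * (k - sur k S)) * y S)"

definition load :: "'v set \<Rightarrow> ('v set \<Rightarrow> real) \<Rightarrow> 'v \<Rightarrow> 'v \<Rightarrow> real" where
  "load V y u w = (\<Sum>S\<in>{S\<in>Pow V. {u, w} \<in> delta V S}. y S)"

definition dual_feasible ::
  "nat \<Rightarrow> nat \<Rightarrow> ('x list \<Rightarrow> real) \<Rightarrow> 'v set \<Rightarrow> ('v \<Rightarrow> real) \<Rightarrow> ('v \<Rightarrow> 'x) \<Rightarrow> ('v set \<Rightarrow> real) \<Rightarrow> bool" where
  "dual_feasible k \<gamma> dH V atime pos y \<longleftrightarrow>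
     (\<forall>S. S \<subseteq> V \<longrightarrow> 0 \<le> y S) \<and>
     (\<forall>u\<in>V. \<forall>w\<in>V. u \<noteq> w \<longrightarrow>
        load V y u w \<le> opt_cost k dH atime pos u w / (real \<gamma> * real k ^ 2))"

definition dual_opt ::
  "nat \<Rightarrow> nat \<Rightarrow> ('x list \<Rightarrow> real) \<Rightarrow> 'v set \<Rightarrow> ('v \<Rightarrow> real) \<Rightarrow> ('v \<Rightarrow> 'x) \<Rightarrow> real" where
  "dual_opt k \<gamma> dH V atime pos =
     Sup (dual_obj k V ` {y. dual_feasible k \<gamma> dH V atime pos y})"

record 'v gd_state =
  time :: real
  act :: "'v set set"
  mat :: "'v set set"
  dual :: "'v set \<Rightarrow> real"

definition gd_init :: "'v gd_state" where
  "gd_init = \<lparr>time = 0, act = {}, mat = {}, dual = (\<lambda>_. 0)\<rparr>"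

definition free :: "'v gd_state \<Rightarrow> 'v set \<Rightarrow> 'v set" where
  "free st S = S - \<Union>(mat st)"

definition crossing :: "'v gd_state \<Rightarrow> 'v \<Rightarrow> 'v \<Rightarrow> bool" where
  "crossing st u w \<longleftrightarrow> (\<exists>S1\<in>act st. \<exists>S2\<in>act st. S1 \<noteq> S2 \<and> u \<in> S1 \<and> w \<in> S2)"

text \<open>One step of GD-k with rate r:
  arrival of a request at its arrival time;
  merging of the active sets of a tight pair (followed by greedy grouping of free requests);
  continuous advance of time (only allowed if no crossing pair is tight at the start,
  no arrival is skipped, and no constraint of a crossing pair is violated at the end).\<close>
definition gd_step ::
  "nat \<Rightarrow> nat \<Rightarrow> ('x list \<Rightarrow> real) \<Rightarrow> 'v set \<Rightarrow> ('v \<Rightarrow> real) \<Rightarrow> ('v \<Rightarrow> 'x) \<Rightarrow> real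
   \<Rightarrow> 'v gd_state \<Rightarrow> 'v gd_state \<Rightarrow> bool" where
  "gd_step k \<gamma> dH V atime pos r st st' \<longleftrightarrow>
     (\<exists>v\<in>V. v \<notin> \<Union>(act st) \<and> atime v = time st \<and>
        st' = st\<lparr>act := insert {v} (act st)\<rparr>)
   \<or> (\<exists>S1 S2 u w G. S1 \<in> act st \<and> S2 \<in> act st \<and> S1 \<noteq> S2 \<and> u \<in> S1 \<and> w \<in> S2 \<and>
        load V (dual st) u w = opt_cost k dH atime pos u w / (real \<gamma> * real k ^ 2) \<and>
        (\<forall>g\<in>G. g \<subseteq> free st (S1 \<union> S2) \<and> card g = k) \<and>
        (\<forall>g1\<in>G. \<forall>g2\<in>G. g1 \<noteq> g2 \<longrightarrow> g1 \<inter> g2 = {}) \<and>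
        card (free st (S1 \<union> S2) - \<Union>G) < k \<and>
        st' = st\<lparr>act := insert (S1 \<union> S2) (act st - {S1, S2}), mat := mat st \<union> G\<rparr>)
   \<or> (\<exists>t'. time st < t' \<and>
        (\<forall>v\<in>V. atime v < t' \<longrightarrow> v \<in> \<Union>(act st)) \<and>
        (\<forall>u w. crossing st u w \<longrightarrow>
           load V (dual st) u w \<noteq> opt_cost k dH atime pos u w / (real \<gamma> * real k ^ 2)) \<and>
        st' = st\<lparr>time := t',
                 dual := (\<lambda>S. if S \<in> act st \<and> free st S \<noteq> {}
                              then dual st S + r * (t' - time st) else dual st S)\<rparr> \<and>
        (\<forall>u w. crossing st' u w \<longrightarrow>
           load V (dual st') u w \<le> opt_cost k dH atime pos u w / (real \<gamma> * real k ^ 2)))"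

end

theory Submission
  imports Defs
begin

text \<open>
  Along a run of GD-k, the sets carrying positive dual value are former active sets with
  nonzero surplus, so they form a laminar family. The tight pairs inside an active set A
  connect it, and the path of tight pairs between two members x, z of A crosses the
  boundary of each such set S \<subseteq> A at most twice; since every tight pair costs exactly
  \<gamma> k^2 times its dual load, d(x, z) \<le> 2 \<gamma> k^2 sum_S y_S. The triangle inequality of the
  H-metric bounds the cost of a group by the k distances to one of its members, so each of
  the m/k groups costs at most 2 \<gamma> k^3 sum_S y_S. Every S with y_S > 0 has
  sur(S) (k - sur(S)) \<ge> k - 1, hence 2 k sum_S y_S is at most 4 times the dual objective.
  The second inequality holds because the final duals are feasible for (D').
\<close>

lemma hmetric_nonneg: "hmetric k \<gamma> dH \<Longrightarrow> length p = k \<Longrightarrow> 0 \<le> dH p"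
  unfolding hmetric_def by blast

lemma hmetric_mset_cong:
  "hmetric k \<gamma> dH \<Longrightarrow> length p = k \<Longrightarrow> mset q = mset p \<Longrightarrow> dH q = dH p"
  unfolding hmetric_def by blast

lemma hmetric_replicate: "hmetric k \<gamma> dH \<Longrightarrow> dH (replicate k a) = 0"
  unfolding hmetric_def by simp

lemma hmetric_triangle_hd:
  assumes "hmetric k \<gamma> dH" and "length p = k" and "1 \<le> k"
  shows "dH p \<le> dH (hd p # replicate (k - 1) a) + dH (a # tl p)"
proof -
  have "dH p \<le> dH (take 1 p @ replicate (k - 1) a) + dH (replicate 1 a @ drop 1 p)"
    using assms unfolding hmetric_def by blast
  moreover have "take 1 p = [hd p]" using assms(2,3) by (cases p) auto
  ultimately show ?thesis by (simp add: drop_Suc)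
qed

lemma hdist_nonneg: "hmetric k \<gamma> dH \<Longrightarrow> 1 \<le> k \<Longrightarrow> 0 \<le> hdist k dH x y"
  unfolding hdist_def using hmetric_nonneg[of k \<gamma> dH] by (simp add: add_nonneg_nonneg)

lemma hdist_self: "hmetric k \<gamma> dH \<Longrightarrow> 1 \<le> k \<Longrightarrow> hdist k dH x x = 0"
  unfolding hdist_def
  by (metis Suc_diff_le diff_Suc_1 replicate_Suc hmetric_replicate add_0)

lemma hdist_commute: "hdist k dH x y = hdist k dH y x"
  unfolding hdist_def by simp

lemma hdist_triangle:
  assumes "hmetric k \<gamma> dH" and "1 \<le> k"
  shows "hdist k dH x z \<le> hdist k dH x y + hdist k dH y z"
proof -
  have half: "dH (x # replicate (k - 1) z)
      \<le> dH (x # replicate (k - 1) y) + dH (y # replicate (k - 1) z)" for x y z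
    using hmetric_triangle_hd[OF assms(1) _ assms(2), of "x # replicate (k - 1) z" y] assms(2)
    by simp
  show ?thesis unfolding hdist_def using half[of x z y] half[of z x y] by simp
qed

text \<open>Repeated use of the triangle inequality replaces the entries of p one by one by a.\<close>
lemma hmetric_le_sum_hdist:
  assumes hm: "hmetric k \<gamma> dH" and k: "1 \<le> k" and len: "length p = k"
  shows "dH p \<le> (\<Sum>i<k. hdist k dH (p ! i) a)"
proof -
  let ?e = "\<lambda>i. dH (p ! i # replicate (k - 1) a)"
  have step: "dH (replicate j a @ drop j p)
      \<le> ?e j + dH (replicate (Suc j) a @ drop (Suc j) p)" if "j < k" for j
  proof -
    let ?r = "p ! j # (replicate j a @ drop (Suc j) p)"
    have "drop j p = p ! j # drop (Suc j) p" using that len by (simp add: Cons_nth_drop_Suc)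
    then have perm: "mset (replicate j a @ drop j p) = mset ?r" by simp
    have "dH (replicate j a @ drop j p) = dH ?r"
      by (rule hmetric_mset_cong[OF hm _ perm]) (use that len in simp)
    also have "\<dots> \<le> ?e j + dH (a # replicate j a @ drop (Suc j) p)"
      using hmetric_triangle_hd[OF hm _ k, of ?r a] that len by simp
    finally show ?thesis by simp
  qed
  have partial: "dH p \<le> (\<Sum>i<n. ?e i) + dH (replicate n a @ drop n p)" if "n \<le> k" for n
    using that
  proof (induction n)
    case (Suc n)
    then show ?case using step[of n] by simp
  qed simp
  have "dH p \<le> (\<Sum>i<k. ?e i)"
    using partial[of k] len hmetric_replicate[OF hm, of a] by simp
  also have "\<dots> \<le> (\<Sum>i<k. hdist k dH (p ! i) a)"
    unfolding hdist_def
    by (rule sum_mono) (use hmetric_nonneg[OF hm, of "a # replicate (k - 1) _"] k in simp)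
  finally show ?thesis .
qed

lemma card_doubleton_Int_eq_1_iff:
  "u \<noteq> w \<Longrightarrow> card ({u, w} \<inter> S) = 1 \<longleftrightarrow> (u \<in> S) \<noteq> (w \<in> S)"
  by (cases "u \<in> S"; cases "w \<in> S") (auto simp: Int_insert_left)

lemma load_eq_sum_separating:
  assumes "u \<in> V" "w \<in> V" "u \<noteq> w" "finite V"
  shows "load V y u w = (\<Sum>S\<in>Pow V. if (u \<in> S) \<noteq> (w \<in> S) then y S else 0)"
proof -
  have "{u, w} \<in> edges V" using assms unfolding edges_def by blast
  then have "{u, w} \<in> delta V S \<longleftrightarrow> (u \<in> S) \<noteq> (w \<in> S)" for S
    unfolding delta_def using card_doubleton_Int_eq_1_iff[OF assms(3)] by simp
  then show ?thesis
    unfolding load_def using sum.inter_filter[of "Pow V" y] assms(4) by simp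
qed

lemma load_commute: "load V y u w = load V y w u"
  unfolding load_def by (simp add: insert_commute)

lemma opt_cost_commute: "opt_cost k dH atime pos u w = opt_cost k dH atime pos w u"
  unfolding opt_cost_def by (simp add: hdist_commute abs_minus_commute)

lemma surplus_product_ge: "1 \<le> (s::nat) \<Longrightarrow> s < k \<Longrightarrow> k - 1 \<le> s * (k - s)"
proof -
  assume "1 \<le> s" "s < k"
  then obtain s' where s: "s = Suc s'" by (cases s) auto
  then have "s * (k - s) = (k - s) + s' * (k - s)" by simp
  moreover have "1 \<le> k - s" using \<open>s < k\<close> by simp
  then have "s' \<le> s' * (k - s)" using mult_le_mono2[of 1 "k - s" s'] by simp
  ultimately show ?thesis using \<open>s < k\<close> s by linarith
qed

lemma card_Union_uniform_disjoint:
  assumes "\<forall>g\<in>G. card g = k" and "0 < k"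
    and "\<forall>g1\<in>G. \<forall>g2\<in>G. g1 \<noteq> g2 \<longrightarrow> g1 \<inter> g2 = {}"
  shows "card (\<Union>G) = k * card G"
proof -
  have "pairwise disjnt G" using assms(3) unfolding pairwise_def disjnt_def by blast
  moreover have "finite g" if "g \<in> G" for g using assms(1,2) that card_ge_0_finite by metis
  ultimately have "card (\<Union>G) = sum card G" by (rule card_Union_disjoint)
  then show ?thesis using assms(1) by simp
qed

lemma dual_feasible_le_total_cost:
  assumes finV: "finite V" and dvd: "k dvd card V"
    and feas: "dual_feasible k \<gamma> dH V atime pos y" and S: "S \<subseteq> V" "sur k S \<noteq> 0"
  shows "y S \<le> (\<Sum>u\<in>V. \<Sum>w\<in>V. \<bar>opt_cost k dH atime pos u w\<bar>) / (real \<gamma> * real k ^ 2)"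
proof -
  have "S \<noteq> {}" "S \<noteq> V" using S(2) dvd unfolding sur_def by auto
  then obtain u w where uw: "u \<in> S" "w \<in> V" "w \<notin> S" using S(1) by blast
  then have uV: "u \<in> V" "u \<noteq> w" using S(1) by blast+
  have "{u, w} \<in> delta V S"
    using uw uV card_doubleton_Int_eq_1_iff[OF uV(2)] unfolding delta_def edges_def by blast
  then have "y S \<le> load V y u w"
    unfolding load_def using S(1) feas finV unfolding dual_feasible_def by (intro member_le_sum) auto
  also have "\<dots> \<le> opt_cost k dH atime pos u w / (real \<gamma> * real k ^ 2)"
    using feas uV uw unfolding dual_feasible_def by blast
  also have "\<dots> \<le> (\<Sum>u\<in>V. \<Sum>w\<in>V. \<bar>opt_cost k dH atime pos u w\<bar>) / (real \<gamma> * real k ^ 2)"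
  proof (rule divide_right_mono)
    have "\<bar>opt_cost k dH atime pos u w\<bar> \<le> (\<Sum>w\<in>V. \<bar>opt_cost k dH atime pos u w\<bar>)"
      by (rule member_le_sum) (use uw finV in auto)
    also have "\<dots> \<le> (\<Sum>u\<in>V. \<Sum>w\<in>V. \<bar>opt_cost k dH atime pos u w\<bar>)"
      by (rule member_le_sum[where f = "\<lambda>u. \<Sum>w\<in>V. \<bar>opt_cost k dH atime pos u w\<bar>"])
         (use uV finV in \<open>auto intro: sum_nonneg\<close>)
    finally show "opt_cost k dH atime pos u w \<le> (\<Sum>u\<in>V. \<Sum>w\<in>V. \<bar>opt_cost k dH atime pos u w\<bar>)"
      by linarith
  qed simp
  finally show ?thesis .
qed

lemma dual_obj_le_dual_opt:
  assumes finV: "finite V" and k: "0 < k" and dvd: "k dvd card V"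
    and feas: "dual_feasible k \<gamma> dH V atime pos y"
  shows "dual_obj k V y \<le> dual_opt k \<gamma> dH V atime pos"
proof -
  let ?B = "(\<Sum>u\<in>V. \<Sum>w\<in>V. \<bar>opt_cost k dH atime pos u w\<bar>) / (real \<gamma> * real k ^ 2)"
  have term_bound: "real (sur k S * (k - sur k S)) * z S \<le> real k ^ 2 * ?B"
    if z: "dual_feasible k \<gamma> dH V atime pos z" and S: "S \<subseteq> V" for z S
  proof (cases "sur k S = 0")
    case False
    have "sur k S * (k - sur k S) \<le> k * k"
      using k unfolding sur_def by (simp add: mult_le_mono)
    then have "real (sur k S * (k - sur k S)) \<le> real k ^ 2"
      by (metis of_nat_mono of_nat_mult power2_eq_square)
    moreover have "0 \<le> z S" using z S unfolding dual_feasible_def by blast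
    ultimately show ?thesis
      using dual_feasible_le_total_cost[OF finV dvd z S False]
      by (meson mult_mono of_nat_0_le_iff zero_le_power2)
  qed (simp add: divide_nonneg_nonneg sum_nonneg)
  have "bdd_above (dual_obj k V ` {y. dual_feasible k \<gamma> dH V atime pos y})"
  proof (rule bdd_aboveI2)
    fix z assume "z \<in> {y. dual_feasible k \<gamma> dH V atime pos y}"
    then show "dual_obj k V z \<le> (\<Sum>S\<in>Pow V. real k ^ 2 * ?B)"
      unfolding dual_obj_def by (intro sum_mono term_bound) auto
  qed
  then show ?thesis
    unfolding dual_opt_def using feas by (intro cSup_upper) auto
qed

lemma Union_merge:
  "S1 \<in> \<A> \<Longrightarrow> S2 \<in> \<A> \<Longrightarrow> \<Union>(insert (S1 \<union> S2) (\<A> - {S1, S2})) = \<Union>\<A>"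
  by auto

lemma merge_refines:
  "S1 \<in> \<A> \<Longrightarrow> S2 \<in> \<A> \<Longrightarrow> T \<in> \<A> \<Longrightarrow> \<exists>B\<in>insert (S1 \<union> S2) (\<A> - {S1, S2}). T \<subseteq> B"
  by (cases "T = S1 \<or> T = S2") auto

lemma merge_disjoint:
  assumes "\<forall>A\<in>\<A>. \<forall>B\<in>\<A>. A \<noteq> B \<longrightarrow> A \<inter> B = {}" and "S1 \<in> \<A>" "S2 \<in> \<A>"
  shows "\<forall>A\<in>insert (S1 \<union> S2) (\<A> - {S1, S2}). \<forall>B\<in>insert (S1 \<union> S2) (\<A> - {S1, S2}).
           A \<noteq> B \<longrightarrow> A \<inter> B = {}"
proof (intro ballI impI)
  have sep: "T \<inter> (S1 \<union> S2) = {}" if "T \<in> \<A>" "T \<noteq> S1" "T \<noteq> S2" for T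
    using assms that by auto
  fix A B assume "A \<in> insert (S1 \<union> S2) (\<A> - {S1, S2})" "B \<in> insert (S1 \<union> S2) (\<A> - {S1, S2})"
    and "A \<noteq> B"
  then consider "A = S1 \<union> S2" "B \<in> \<A>" "B \<noteq> S1" "B \<noteq> S2"
    | "B = S1 \<union> S2" "A \<in> \<A>" "A \<noteq> S1" "A \<noteq> S2" | "A \<in> \<A>" "B \<in> \<A>"
    by auto
  then show "A \<inter> B = {}"
    by cases (use sep assms(1) \<open>A \<noteq> B\<close> in auto)
qed

lemma dvd_card_matched_merge:
  assumes "finite S1" "finite S2" "S1 \<inter> S2 = {}" and G: "\<Union>G \<subseteq> (S1 \<union> S2) - M"
    and "\<forall>g\<in>G. card g = k" "0 < k" "\<forall>g1\<in>G. \<forall>g2\<in>G. g1 \<noteq> g2 \<longrightarrow> g1 \<inter> g2 = {}"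
    and "k dvd card (S1 \<inter> M)" "k dvd card (S2 \<inter> M)"
  shows "k dvd card ((S1 \<union> S2) \<inter> (M \<union> \<Union>G))"
proof -
  have fin: "finite (S1 \<inter> M)" "finite (S2 \<inter> M)" "finite (\<Union>G)"
    using assms(1,2) G finite_subset by blast+
  have "(S1 \<union> S2) \<inter> (M \<union> \<Union>G) = ((S1 \<inter> M) \<union> (S2 \<inter> M)) \<union> \<Union>G" using G by blast
  moreover have "card ((S1 \<inter> M) \<union> (S2 \<inter> M)) = card (S1 \<inter> M) + card (S2 \<inter> M)"
    using fin assms(3) by (intro card_Un_disjoint) auto
  moreover have "card (((S1 \<inter> M) \<union> (S2 \<inter> M)) \<union> \<Union>G)
      = card ((S1 \<inter> M) \<union> (S2 \<inter> M)) + card (\<Union>G)"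
    using fin G by (intro card_Un_disjoint) auto
  moreover have "card (\<Union>G) = k * card G" by (rule card_Union_uniform_disjoint[OF assms(5-7)])
  ultimately show ?thesis using assms(8,9) by simp
qed

locale gd_run =
  fixes k \<gamma> :: nat and dH :: "'x list \<Rightarrow> real" and V :: "'v set"
    and atime :: "'v \<Rightarrow> real" and pos :: "'v \<Rightarrow> 'x"
  assumes k2: "2 \<le> k" and \<gamma>1: "1 \<le> \<gamma>" and hm: "hmetric k \<gamma> dH" and finV: "finite V"
begin

text \<open>The reciprocal 1/r of the rate of GD-k.\<close>
definition scale :: real where "scale = real \<gamma> * real k ^ 2"

lemma scale_pos: "0 < scale"
  unfolding scale_def using k2 \<gamma>1 by simp

lemma one_le_k: "1 \<le> k" using k2 by simp

text \<open>
  For x, z in an active set A and S \<subseteq> A, the path of tight pairs from x to z crosses the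
  boundary of S at most once per endpoint outside S; path_weight counts these endpoints.
\<close>
definition path_weight :: "'v set \<Rightarrow> 'v \<Rightarrow> 'v \<Rightarrow> 'v set \<Rightarrow> real" where
  "path_weight A x z S =
     (if S \<subseteq> A then (if x \<in> S then 0 else 1) + (if z \<in> S then 0 else 1) else 0)"

lemma path_weight_nonneg: "0 \<le> path_weight A x z S"
  unfolding path_weight_def by auto

lemma path_weight_le_2: "path_weight A x z S \<le> 2"
  unfolding path_weight_def by auto

lemma path_weight_commute: "path_weight A x z S = path_weight A z x S"
  unfolding path_weight_def by auto

lemma path_weight_mono: "A \<subseteq> B \<Longrightarrow> path_weight A x z S \<le> path_weight B x z S"
  unfolding path_weight_def by auto

definition gd_partition :: "'v gd_state \<Rightarrow> bool" where
  "gd_partition st \<longleftrightarrow>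
    (\<forall>A\<in>act st. A \<noteq> {} \<and> A \<subseteq> V) \<and>
    (\<forall>A\<in>act st. \<forall>B\<in>act st. A \<noteq> B \<longrightarrow> A \<inter> B = {}) \<and>
    \<Union>(mat st) \<subseteq> \<Union>(act st) \<and>
    (\<forall>G\<in>mat st. card G = k \<and> (\<exists>A\<in>act st. G \<subseteq> A)) \<and>
    (\<forall>G1\<in>mat st. \<forall>G2\<in>mat st. G1 \<noteq> G2 \<longrightarrow> G1 \<inter> G2 = {}) \<and>
    (\<forall>A\<in>act st. k dvd card (A \<inter> \<Union>(mat st))) \<and>
    (\<forall>A\<in>act st. card (free st A) < k)"

lemma
  assumes "gd_partition st"
  shows act_ne_subset: "\<forall>A\<in>act st. A \<noteq> {} \<and> A \<subseteq> V"
    and act_disjoint: "\<forall>A\<in>act st. \<forall>B\<in>act st. A \<noteq> B \<longrightarrow> A \<inter> B = {}"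
    and matched_subset_active: "\<Union>(mat st) \<subseteq> \<Union>(act st)"
    and group_card_active: "\<forall>G\<in>mat st. card G = k \<and> (\<exists>A\<in>act st. G \<subseteq> A)"
    and groups_disjoint: "\<forall>G1\<in>mat st. \<forall>G2\<in>mat st. G1 \<noteq> G2 \<longrightarrow> G1 \<inter> G2 = {}"
    and matched_part_dvd: "\<forall>A\<in>act st. k dvd card (A \<inter> \<Union>(mat st))"
    and free_card_less: "\<forall>A\<in>act st. card (free st A) < k"
  by (insert assms[unfolded gd_partition_def], elim conjE, assumption)+

lemma gd_partitionI:
  assumes "\<forall>A\<in>act st. A \<noteq> {} \<and> A \<subseteq> V"
    and "\<forall>A\<in>act st. \<forall>B\<in>act st. A \<noteq> B \<longrightarrow> A \<inter> B = {}"
    and "\<Union>(mat st) \<subseteq> \<Union>(act st)"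
    and "\<forall>G\<in>mat st. card G = k \<and> (\<exists>A\<in>act st. G \<subseteq> A)"
    and "\<forall>G1\<in>mat st. \<forall>G2\<in>mat st. G1 \<noteq> G2 \<longrightarrow> G1 \<inter> G2 = {}"
    and "\<forall>A\<in>act st. k dvd card (A \<inter> \<Union>(mat st))"
    and "\<forall>A\<in>act st. card (free st A) < k"
  shows "gd_partition st"
  using assms unfolding gd_partition_def by (intro conjI) assumption+

text \<open>
  The fourth conjunct says that the duals of sets around u have grown at rate at most 1/scale
  since u arrived; it keeps the pairs formed with a newly arriving request feasible.
\<close>
definition gd_dual_inv :: "'v gd_state \<Rightarrow> bool" where
  "gd_dual_inv st \<longleftrightarrow>
    (\<forall>S. 0 \<le> dual st S) \<and>
    (\<forall>S. dual st S \<noteq> 0 \<longrightarrow> S \<noteq> {} \<and> (\<exists>A\<in>act st. S \<subseteq> A) \<and> card S mod k \<noteq> 0) \<and>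
    (\<forall>A\<in>act st. \<forall>x\<in>A. \<forall>z\<in>A.
       hdist k dH (pos x) (pos z) \<le> scale * (\<Sum>S\<in>Pow V. dual st S * path_weight A x z S)) \<and>
    (\<forall>u\<in>\<Union>(act st). (\<Sum>S\<in>Pow V. if u \<in> S then dual st S else 0) \<le> (time st - atime u) / scale) \<and>
    (\<forall>u\<in>\<Union>(act st). \<forall>w\<in>\<Union>(act st). u \<noteq> w \<longrightarrow>
       load V (dual st) u w \<le> opt_cost k dH atime pos u w / scale)"

lemma
  assumes "gd_dual_inv st"
  shows dual_nonneg: "\<forall>S. 0 \<le> dual st S"
    and dual_support: "\<forall>S. dual st S \<noteq> 0 \<longrightarrow> S \<noteq> {} \<and> (\<exists>A\<in>act st. S \<subseteq> A) \<and> card S mod k \<noteq> 0"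
    and hdist_le_path_weight: "\<forall>A\<in>act st. \<forall>x\<in>A. \<forall>z\<in>A.
       hdist k dH (pos x) (pos z) \<le> scale * (\<Sum>S\<in>Pow V. dual st S * path_weight A x z S)"
    and vertex_load_le_waiting: "\<forall>u\<in>\<Union>(act st).
       (\<Sum>S\<in>Pow V. if u \<in> S then dual st S else 0) \<le> (time st - atime u) / scale"
    and load_le_opt_cost: "\<forall>u\<in>\<Union>(act st). \<forall>w\<in>\<Union>(act st). u \<noteq> w \<longrightarrow>
       load V (dual st) u w \<le> opt_cost k dH atime pos u w / scale"
  by (insert assms[unfolded gd_dual_inv_def], elim conjE, assumption)+

lemma gd_dual_invI:
  assumes "\<forall>S. 0 \<le> dual st S"
    and "\<forall>S. dual st S \<noteq> 0 \<longrightarrow> S \<noteq> {} \<and> (\<exists>A\<in>act st. S \<subseteq> A) \<and> card S mod k \<noteq> 0"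
    and "\<forall>A\<in>act st. \<forall>x\<in>A. \<forall>z\<in>A.
       hdist k dH (pos x) (pos z) \<le> scale * (\<Sum>S\<in>Pow V. dual st S * path_weight A x z S)"
    and "\<forall>u\<in>\<Union>(act st).
       (\<Sum>S\<in>Pow V. if u \<in> S then dual st S else 0) \<le> (time st - atime u) / scale"
    and "\<forall>u\<in>\<Union>(act st). \<forall>w\<in>\<Union>(act st). u \<noteq> w \<longrightarrow>
       load V (dual st) u w \<le> opt_cost k dH atime pos u w / scale"
  shows "gd_dual_inv st"
  using assms unfolding gd_dual_inv_def by (intro conjI) assumption+

definition gd_invariant :: "'v gd_state \<Rightarrow> bool" where
  "gd_invariant st \<longleftrightarrow> gd_partition st \<and> gd_dual_inv st"

lemma gd_invariant_init: "gd_invariant gd_init"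
  unfolding gd_invariant_def gd_partition_def gd_dual_inv_def gd_init_def by simp

lemma gd_partition_arrival:
  assumes P: "gd_partition st" and v: "v \<in> V" "v \<notin> \<Union>(act st)"
    and st': "st' = st\<lparr>act := insert {v} (act st)\<rparr>"
  shows "gd_partition st'"
proof -
  have a: "act st' = insert {v} (act st)" and m: "mat st' = mat st" using st' by simp_all
  have fr: "free st' = free st" by (simp add: fun_eq_iff free_def m)
  have vm: "v \<notin> \<Union>(mat st)" using matched_subset_active[OF P] v(2) by blast
  show ?thesis
  proof (rule gd_partitionI)
    show "\<forall>A\<in>act st'. A \<noteq> {} \<and> A \<subseteq> V" unfolding a using act_ne_subset[OF P] v(1) by blast
    show "\<forall>A\<in>act st'. \<forall>B\<in>act st'. A \<noteq> B \<longrightarrow> A \<inter> B = {}"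
      unfolding a using act_disjoint[OF P] v(2) by blast
    show "\<Union>(mat st') \<subseteq> \<Union>(act st')" unfolding a m using matched_subset_active[OF P] by blast
    show "\<forall>G\<in>mat st'. card G = k \<and> (\<exists>A\<in>act st'. G \<subseteq> A)"
      unfolding a m using group_card_active[OF P] by blast
    show "\<forall>G1\<in>mat st'. \<forall>G2\<in>mat st'. G1 \<noteq> G2 \<longrightarrow> G1 \<inter> G2 = {}"
      unfolding m by (rule groups_disjoint[OF P])
    show "\<forall>A\<in>act st'. k dvd card (A \<inter> \<Union>(mat st'))"
      unfolding a m using matched_part_dvd[OF P] vm by simp
    have "free st {v} = {v}" using vm by (auto simp: free_def)
    then show "\<forall>A\<in>act st'. card (free st' A) < k"
      unfolding a fr using free_card_less[OF P] k2 by simp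
  qed
qed

lemma load_new_request:
  assumes P: "gd_partition st" and D: "gd_dual_inv st"
    and v: "v \<in> V" "v \<notin> \<Union>(act st)" "atime v = time st" and u: "u \<in> \<Union>(act st)"
  shows "load V (dual st) u v \<le> opt_cost k dH atime pos u v / scale"
proof -
  have v_unloaded: "v \<notin> S" if "dual st S \<noteq> 0" for S using dual_support[OF D] v(2) that by blast
  have uV: "u \<in> V" "u \<noteq> v" using u act_ne_subset[OF P] v(2) by blast+
  have "load V (dual st) u v = (\<Sum>S\<in>Pow V. if (u \<in> S) \<noteq> (v \<in> S) then dual st S else 0)"
    by (rule load_eq_sum_separating[OF uV(1) v(1) uV(2) finV])
  also have "\<dots> \<le> (\<Sum>S\<in>Pow V. if u \<in> S then dual st S else 0)"
  proof (rule sum_mono)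
    fix S
    show "(if (u \<in> S) \<noteq> (v \<in> S) then dual st S else 0) \<le> (if u \<in> S then dual st S else 0)"
      using v_unloaded[of S] by (cases "dual st S = 0") auto
  qed
  also have "\<dots> \<le> (time st - atime u) / scale" using vertex_load_le_waiting[OF D] u by blast
  also have "\<dots> \<le> opt_cost k dH atime pos u v / scale"
  proof (rule divide_right_mono)
    show "time st - atime u \<le> opt_cost k dH atime pos u v"
      unfolding opt_cost_def using hdist_nonneg[OF hm one_le_k, of "pos u" "pos v"] v(3) by linarith
  qed (use scale_pos in simp)
  finally show ?thesis .
qed

lemma gd_dual_inv_arrival:
  assumes P: "gd_partition st" and D: "gd_dual_inv st"
    and v: "v \<in> V" "v \<notin> \<Union>(act st)" "atime v = time st"
    and st': "st' = st\<lparr>act := insert {v} (act st)\<rparr>"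
  shows "gd_dual_inv st'"
proof -
  have a: "act st' = insert {v} (act st)" and d: "dual st' = dual st" and t: "time st' = time st"
    using st' by simp_all
  have v_unloaded: "v \<notin> S" if "dual st S \<noteq> 0" for S using dual_support[OF D] v(2) that by blast
  note new_pair = load_new_request[OF P D v]
  show ?thesis
  proof (rule gd_dual_invI)
    show "\<forall>S. 0 \<le> dual st' S" unfolding d by (rule dual_nonneg[OF D])
    show "\<forall>S. dual st' S \<noteq> 0 \<longrightarrow> S \<noteq> {} \<and> (\<exists>A\<in>act st'. S \<subseteq> A) \<and> card S mod k \<noteq> 0"
      unfolding a d using dual_support[OF D] by blast
    show "\<forall>A\<in>act st'. \<forall>x\<in>A. \<forall>z\<in>A.
        hdist k dH (pos x) (pos z) \<le> scale * (\<Sum>S\<in>Pow V. dual st' S * path_weight A x z S)"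
    proof (intro ballI)
      fix A x z assume A: "A \<in> act st'" "x \<in> A" "z \<in> A"
      then consider "A = {v}" "x = v" "z = v" | "A \<in> act st" unfolding a by auto
      then show "hdist k dH (pos x) (pos z) \<le> scale * (\<Sum>S\<in>Pow V. dual st' S * path_weight A x z S)"
      proof cases
        case 1
        have "0 \<le> scale * (\<Sum>S\<in>Pow V. dual st S * path_weight A x z S)"
          using scale_pos dual_nonneg[OF D] path_weight_nonneg by (simp add: sum_nonneg)
        then show ?thesis unfolding d using 1 hdist_self[OF hm one_le_k] by simp
      next
        case 2
        then show ?thesis unfolding d using hdist_le_path_weight[OF D] A by blast
      qed
    qed
    show "\<forall>u\<in>\<Union>(act st').
        (\<Sum>S\<in>Pow V. if u \<in> S then dual st' S else 0) \<le> (time st' - atime u) / scale"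
    proof
      fix u assume "u \<in> \<Union>(act st')"
      then consider "u = v" | "u \<in> \<Union>(act st)" unfolding a by auto
      then show "(\<Sum>S\<in>Pow V. if u \<in> S then dual st' S else 0) \<le> (time st' - atime u) / scale"
      proof cases
        case 1
        have "(\<Sum>S\<in>Pow V. if v \<in> S then dual st S else 0) = 0"
          by (rule sum.neutral) (use v_unloaded in auto)
        then show ?thesis unfolding d t using 1 v(3) by simp
      next
        case 2
        then show ?thesis unfolding d t using vertex_load_le_waiting[OF D] by blast
      qed
    qed
    show "\<forall>u\<in>\<Union>(act st'). \<forall>w\<in>\<Union>(act st'). u \<noteq> w \<longrightarrow>
        load V (dual st') u w \<le> opt_cost k dH atime pos u w / scale"
    proof (intro ballI impI)
      fix u w assume uw: "u \<in> \<Union>(act st')" "w \<in> \<Union>(act st')" "u \<noteq> w"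
      then consider "u \<in> \<Union>(act st)" "w \<in> \<Union>(act st)" | "u \<in> \<Union>(act st)" "w = v"
        | "u = v" "w \<in> \<Union>(act st)"
        unfolding a by auto
      then show "load V (dual st') u w \<le> opt_cost k dH atime pos u w / scale"
      proof cases
        case 1
        then show ?thesis unfolding d using load_le_opt_cost[OF D] uw(3) by blast
      next
        case 2
        then show ?thesis unfolding d using new_pair by simp
      next
        case 3
        then show ?thesis
          unfolding d load_commute[of V _ u] opt_cost_commute[of _ _ _ _ u] using new_pair by simp
      qed
    qed
  qed
qed

lemma path_weight_concat:
  assumes "S1 \<inter> S2 = {}" "x \<in> S1" "u \<in> S1" "w \<in> S2" "z \<in> S2" "S \<noteq> {}"
    and "S \<subseteq> S1 \<or> S \<subseteq> S2 \<or> S \<inter> (S1 \<union> S2) = {}"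
  shows "path_weight S1 x u S + (if (u \<in> S) \<noteq> (w \<in> S) then 1 else 0) + path_weight S2 w z S
    \<le> path_weight (S1 \<union> S2) x z S"
  using assms(7)
proof (elim disjE)
  assume "S \<subseteq> S1"
  moreover have "w \<notin> S" "z \<notin> S" "\<not> S \<subseteq> S2" using calculation assms by blast+
  ultimately show ?thesis unfolding path_weight_def by auto
next
  assume "S \<subseteq> S2"
  moreover have "u \<notin> S" "x \<notin> S" "\<not> S \<subseteq> S1" using calculation assms by blast+
  ultimately show ?thesis unfolding path_weight_def by auto
next
  assume "S \<inter> (S1 \<union> S2) = {}"
  then have "u \<notin> S" "w \<notin> S" "\<not> S \<subseteq> S1" "\<not> S \<subseteq> S2" using assms by blast+
  then show ?thesis using path_weight_nonneg[of "S1 \<union> S2" x z S] unfolding path_weight_def by simp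
qed

text \<open>
  Concatenating the paths from x to u in S1 and from w to z in S2 with the tight pair
  {u, w} gives a path from x to z in the merged set.
\<close>
lemma hdist_le_path_weight_across:
  assumes P: "gd_partition st" and D: "gd_dual_inv st"
    and S: "S1 \<in> act st" "S2 \<in> act st" "S1 \<noteq> S2" and uw: "u \<in> S1" "w \<in> S2"
    and tight: "load V (dual st) u w = opt_cost k dH atime pos u w / scale"
    and xz: "x \<in> S1" "z \<in> S2"
  shows "hdist k dH (pos x) (pos z) \<le> scale * (\<Sum>S\<in>Pow V. dual st S * path_weight (S1 \<union> S2) x z S)"
proof -
  let ?d = "hdist k dH" and ?y = "dual st"
  have dis: "S1 \<inter> S2 = {}" using act_disjoint[OF P] S by blast
  have V: "u \<in> V" "w \<in> V" "u \<noteq> w" using act_ne_subset[OF P] S uw dis by blast+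
  have "?d (pos u) (pos w) \<le> scale * load V ?y u w"
    using tight scale_pos unfolding opt_cost_def by simp
  then have mid: "?d (pos u) (pos w) \<le> scale * (\<Sum>S\<in>Pow V. if (u \<in> S) \<noteq> (w \<in> S) then ?y S else 0)"
    unfolding load_eq_sum_separating[OF V finV] .
  have pointwise: "?y S * path_weight S1 x u S + (if (u \<in> S) \<noteq> (w \<in> S) then ?y S else 0)
      + ?y S * path_weight S2 w z S \<le> ?y S * path_weight (S1 \<union> S2) x z S" for S
  proof (cases "?y S = 0")
    case False
    then obtain T where T: "T \<in> act st" "S \<subseteq> T" and "S \<noteq> {}" using dual_support[OF D] by blast
    moreover have "T = S1 \<or> T = S2 \<or> T \<inter> (S1 \<union> S2) = {}" using act_disjoint[OF P] T S by blast
    ultimately have "S \<subseteq> S1 \<or> S \<subseteq> S2 \<or> S \<inter> (S1 \<union> S2) = {}" by blast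
    from path_weight_concat[OF dis xz(1) uw xz(2) \<open>S \<noteq> {}\<close> this]
    have "?y S * (path_weight S1 x u S + (if (u \<in> S) \<noteq> (w \<in> S) then 1 else 0)
        + path_weight S2 w z S) \<le> ?y S * path_weight (S1 \<union> S2) x z S"
      using dual_nonneg[OF D] by (intro mult_left_mono) auto
    then show ?thesis by (cases "(u \<in> S) \<noteq> (w \<in> S)") (simp_all add: algebra_simps)
  qed simp
  have "?d (pos x) (pos z) \<le> ?d (pos x) (pos u) + ?d (pos u) (pos w) + ?d (pos w) (pos z)"
    using hdist_triangle[OF hm one_le_k, of "pos x" "pos z" "pos u"]
      hdist_triangle[OF hm one_le_k, of "pos u" "pos z" "pos w"] by linarith
  also have "\<dots> \<le> scale * (\<Sum>S\<in>Pow V. ?y S * path_weight S1 x u S)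
      + scale * (\<Sum>S\<in>Pow V. if (u \<in> S) \<noteq> (w \<in> S) then ?y S else 0)
      + scale * (\<Sum>S\<in>Pow V. ?y S * path_weight S2 w z S)"
    using hdist_le_path_weight[OF D] S uw xz mid by (intro add_mono) blast+
  also have "\<dots> \<le> scale * (\<Sum>S\<in>Pow V. ?y S * path_weight (S1 \<union> S2) x z S)"
  proof -
    have "(\<Sum>S\<in>Pow V. ?y S * path_weight S1 x u S + (if (u \<in> S) \<noteq> (w \<in> S) then ?y S else 0)
        + ?y S * path_weight S2 w z S) \<le> (\<Sum>S\<in>Pow V. ?y S * path_weight (S1 \<union> S2) x z S)"
      by (rule sum_mono) (rule pointwise)
    then show ?thesis using scale_pos by (simp add: sum.distrib flip: distrib_left)
  qed
  finally show ?thesis .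
qed

lemma hdist_le_path_weight_merged:
  assumes P: "gd_partition st" and D: "gd_dual_inv st"
    and S: "S1 \<in> act st" "S2 \<in> act st" "S1 \<noteq> S2" and uw: "u \<in> S1" "w \<in> S2"
    and tight: "load V (dual st) u w = opt_cost k dH atime pos u w / scale"
    and xz: "x \<in> S1 \<union> S2" "z \<in> S1 \<union> S2"
  shows "hdist k dH (pos x) (pos z) \<le> scale * (\<Sum>S\<in>Pow V. dual st S * path_weight (S1 \<union> S2) x z S)"
proof -
  have within: "hdist k dH (pos x) (pos z) \<le> scale * (\<Sum>S\<in>Pow V. dual st S * path_weight (S1 \<union> S2) x z S)"
    if "T \<in> act st" "T \<subseteq> S1 \<union> S2" "x \<in> T" "z \<in> T" for T
  proof -
    have "(\<Sum>S\<in>Pow V. dual st S * path_weight T x z S)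
        \<le> (\<Sum>S\<in>Pow V. dual st S * path_weight (S1 \<union> S2) x z S)"
      using dual_nonneg[OF D] path_weight_mono[OF that(2)] by (intro sum_mono mult_left_mono) auto
    then show ?thesis using hdist_le_path_weight[OF D] that scale_pos
      by (meson order_trans mult_left_mono less_imp_le)
  qed
  consider "x \<in> S1" "z \<in> S1" | "x \<in> S2" "z \<in> S2" | "x \<in> S1" "z \<in> S2" | "x \<in> S2" "z \<in> S1"
    using xz by blast
  then show ?thesis
  proof cases
    case 4
    then show ?thesis
      using hdist_le_path_weight_across[OF P D S uw tight 4(2,1)]
      by (simp add: hdist_commute path_weight_commute[of _ z])
  qed (use within S hdist_le_path_weight_across[OF P D S uw tight] in blast)+
qed

lemma gd_partition_merge:
  assumes P: "gd_partition st"
    and S: "S1 \<in> act st" "S2 \<in> act st" "S1 \<noteq> S2"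
    and G: "\<forall>g\<in>G. g \<subseteq> free st (S1 \<union> S2) \<and> card g = k"
      "\<forall>g1\<in>G. \<forall>g2\<in>G. g1 \<noteq> g2 \<longrightarrow> g1 \<inter> g2 = {}"
      "card (free st (S1 \<union> S2) - \<Union>G) < k"
    and st': "st' = st\<lparr>act := insert (S1 \<union> S2) (act st - {S1, S2}), mat := mat st \<union> G\<rparr>"
  shows "gd_partition st'"
proof -
  have a: "act st' = insert (S1 \<union> S2) (act st - {S1, S2})" and m: "mat st' = mat st \<union> G"
    using st' by simp_all
  have dis: "S1 \<inter> S2 = {}" using act_disjoint[OF P] S by blast
  have GA: "\<Union>G \<subseteq> (S1 \<union> S2) - \<Union>(mat st)" using G(1) unfolding free_def by blast
  have others: "T \<inter> (S1 \<union> S2) = {}" if "T \<in> act st" "T \<noteq> S1" "T \<noteq> S2" for T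
    using act_disjoint[OF P] that S by blast
  have fin: "finite S1" "finite S2" using act_ne_subset[OF P] S finV finite_subset by blast+
  show ?thesis
  proof (rule gd_partitionI)
    show "\<forall>A\<in>act st'. A \<noteq> {} \<and> A \<subseteq> V" unfolding a using act_ne_subset[OF P] S by auto
    show "\<forall>A\<in>act st'. \<forall>B\<in>act st'. A \<noteq> B \<longrightarrow> A \<inter> B = {}"
      unfolding a by (rule merge_disjoint[OF act_disjoint[OF P] S(1,2)])
    show "\<Union>(mat st') \<subseteq> \<Union>(act st')"
      unfolding a m Union_merge[OF S(1,2)] using matched_subset_active[OF P] GA S by blast
    show "\<forall>g\<in>mat st'. card g = k \<and> (\<exists>A\<in>act st'. g \<subseteq> A)"
      unfolding a m using group_card_active[OF P] G(1) merge_refines[OF S(1,2)] unfolding free_def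
      by (metis (no_types, lifting) Diff_subset Un_iff insertI1 subset_trans)
    show "\<forall>g1\<in>mat st'. \<forall>g2\<in>mat st'. g1 \<noteq> g2 \<longrightarrow> g1 \<inter> g2 = {}"
      unfolding m using groups_disjoint[OF P] G(2) GA by blast
    show "\<forall>A\<in>act st'. k dvd card (A \<inter> \<Union>(mat st'))"
    proof
      fix A assume "A \<in> act st'"
      then consider "A = S1 \<union> S2" | "A \<in> act st" "A \<noteq> S1" "A \<noteq> S2" unfolding a by blast
      then show "k dvd card (A \<inter> \<Union>(mat st'))"
      proof cases
        case 1
        then show ?thesis unfolding m Union_Un_distrib
          using dvd_card_matched_merge[OF fin dis GA] G k2 matched_part_dvd[OF P] S by auto
      next
        case 2
        then have "A \<inter> \<Union>(mat st') = A \<inter> \<Union>(mat st)" using others GA unfolding m by blast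
        then show ?thesis using matched_part_dvd[OF P] 2 by simp
      qed
    qed
    show "\<forall>A\<in>act st'. card (free st' A) < k"
    proof
      fix A assume "A \<in> act st'"
      then consider "A = S1 \<union> S2" | "A \<in> act st" "A \<noteq> S1" "A \<noteq> S2" unfolding a by blast
      then show "card (free st' A) < k"
      proof cases
        case 1
        then have "free st' A = free st (S1 \<union> S2) - \<Union>G" unfolding free_def m by auto
        then show ?thesis using G(3) by simp
      next
        case 2
        then have "free st' A = free st A" using others GA unfolding m free_def by blast
        then show ?thesis using free_card_less[OF P] 2 by simp
      qed
    qed
  qed
qed

lemma gd_dual_inv_merge:
  assumes P: "gd_partition st" and D: "gd_dual_inv st"
    and S: "S1 \<in> act st" "S2 \<in> act st" "S1 \<noteq> S2" and uw: "u \<in> S1" "w \<in> S2"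
    and tight: "load V (dual st) u w = opt_cost k dH atime pos u w / scale"
    and st': "st' = st\<lparr>act := insert (S1 \<union> S2) (act st - {S1, S2}), mat := mat st \<union> G\<rparr>"
  shows "gd_dual_inv st'"
proof -
  have a: "act st' = insert (S1 \<union> S2) (act st - {S1, S2})"
    and d: "dual st' = dual st" and t: "time st' = time st"
    using st' by simp_all
  have cover: "\<Union>(act st') = \<Union>(act st)" unfolding a by (rule Union_merge[OF S(1,2)])
  show ?thesis
  proof (rule gd_dual_invI)
    show "\<forall>S. 0 \<le> dual st' S" unfolding d by (rule dual_nonneg[OF D])
    show "\<forall>S. dual st' S \<noteq> 0 \<longrightarrow> S \<noteq> {} \<and> (\<exists>A\<in>act st'. S \<subseteq> A) \<and> card S mod k \<noteq> 0"
    proof (intro allI impI)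
      fix S assume "dual st' S \<noteq> 0"
      then obtain T where "S \<noteq> {}" "card S mod k \<noteq> 0" "T \<in> act st" "S \<subseteq> T"
        using dual_support[OF D] unfolding d by blast
      moreover obtain B where "B \<in> act st'" "T \<subseteq> B"
        using merge_refines[OF S(1,2) \<open>T \<in> act st\<close>] unfolding a by blast
      ultimately show "S \<noteq> {} \<and> (\<exists>A\<in>act st'. S \<subseteq> A) \<and> card S mod k \<noteq> 0" by blast
    qed
    show "\<forall>A\<in>act st'. \<forall>x\<in>A. \<forall>z\<in>A.
        hdist k dH (pos x) (pos z) \<le> scale * (\<Sum>S\<in>Pow V. dual st' S * path_weight A x z S)"
    proof (intro ballI)
      fix A x z assume A: "A \<in> act st'" "x \<in> A" "z \<in> A"
      then consider "A = S1 \<union> S2" | "A \<in> act st" unfolding a by blast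
      then show "hdist k dH (pos x) (pos z) \<le> scale * (\<Sum>S\<in>Pow V. dual st' S * path_weight A x z S)"
      proof cases
        case 1
        then show ?thesis unfolding d using hdist_le_path_weight_merged[OF P D S uw tight] A by simp
      next
        case 2
        then show ?thesis unfolding d using hdist_le_path_weight[OF D] A by blast
      qed
    qed
    show "\<forall>u\<in>\<Union>(act st').
        (\<Sum>S\<in>Pow V. if u \<in> S then dual st' S else 0) \<le> (time st' - atime u) / scale"
      unfolding cover d t by (rule vertex_load_le_waiting[OF D])
    show "\<forall>u\<in>\<Union>(act st'). \<forall>w\<in>\<Union>(act st'). u \<noteq> w \<longrightarrow>
        load V (dual st') u w \<le> opt_cost k dH atime pos u w / scale"
      unfolding cover d by (rule load_le_opt_cost[OF D])
  qed
qed

lemma gd_partition_cong: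
  "act st' = act st \<Longrightarrow> mat st' = mat st \<Longrightarrow> gd_partition st' \<longleftrightarrow> gd_partition st"
  unfolding gd_partition_def free_def by simp

lemma card_mod_eq_card_free:
  assumes P: "gd_partition st" and A: "A \<in> act st"
  shows "card A mod k = card (free st A)"
proof -
  let ?M = "\<Union>(mat st)"
  have "finite A" using act_ne_subset[OF P] A finV finite_subset by blast
  then have "card A = card (A \<inter> ?M) + card (A - ?M)" by (rule card_Int_Diff)
  moreover obtain q where "card (A \<inter> ?M) = k * q" using matched_part_dvd[OF P] A by blast
  moreover have "card (A - ?M) < k" using free_card_less[OF P] A unfolding free_def by blast
  ultimately show ?thesis unfolding free_def by simp
qed

definition advance :: "'v gd_state \<Rightarrow> real \<Rightarrow> 'v gd_state" where
  "advance st t' = st\<lparr>time := t', dual := (\<lambda>S. if S \<in> act st \<and> free st S \<noteq> {}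
     then dual st S + 1 / scale * (t' - time st) else dual st S)\<rparr>"

lemma dual_advance_ge: "time st \<le> t' \<Longrightarrow> dual st S \<le> dual (advance st t') S"
  unfolding advance_def using scale_pos by simp

lemma vertex_load_advance:
  assumes P: "gd_partition st" and D: "gd_dual_inv st" and "time st \<le> t'"
    and A: "A \<in> act st" "u \<in> A"
  shows "(\<Sum>S\<in>Pow V. if u \<in> S then dual (advance st t') S else 0) \<le> (t' - atime u) / scale"
proof -
  define \<delta> where "\<delta> = 1 / scale * (t' - time st)"
  have "0 \<le> \<delta>" unfolding \<delta>_def using \<open>time st \<le> t'\<close> scale_pos by simp
  have only_A: "S = A" if "S \<in> act st" "u \<in> S" for S using act_disjoint[OF P] A that by blast
  have "(\<Sum>S\<in>Pow V. if u \<in> S then dual (advance st t') S else 0)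
      \<le> (\<Sum>S\<in>Pow V. (if u \<in> S then dual st S else 0) + (if S = A then \<delta> else 0))"
    by (rule sum_mono) (use \<open>0 \<le> \<delta>\<close> only_A in \<open>auto simp: advance_def \<delta>_def\<close>)
  also have "\<dots> = (\<Sum>S\<in>Pow V. if u \<in> S then dual st S else 0) + \<delta>"
    using act_ne_subset[OF P] A finV by (simp add: sum.distrib)
  also have "\<dots> \<le> (time st - atime u) / scale + \<delta>"
    using vertex_load_le_waiting[OF D] A by auto
  also have "\<dots> = (t' - atime u) / scale"
    unfolding \<delta>_def using scale_pos by (simp add: field_simps)
  finally show ?thesis .
qed

lemma load_advance_within:
  assumes P: "gd_partition st" and A: "A \<in> act st" "u \<in> A" "w \<in> A" and "u \<noteq> w"
  shows "load V (dual (advance st t')) u w = load V (dual st) u w"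
proof -
  have V: "u \<in> V" "w \<in> V" using act_ne_subset[OF P] A by blast+
  show ?thesis
    unfolding load_eq_sum_separating[OF V \<open>u \<noteq> w\<close> finV]
  proof (rule sum.cong)
    fix S
    have "S \<notin> act st" if "(u \<in> S) \<noteq> (w \<in> S)" using that A act_disjoint[OF P] by blast
    then show "(if (u \<in> S) \<noteq> (w \<in> S) then dual (advance st t') S else 0)
        = (if (u \<in> S) \<noteq> (w \<in> S) then dual st S else 0)"
      unfolding advance_def by auto
  qed simp
qed

lemma gd_dual_inv_advance:
  assumes P: "gd_partition st" and D: "gd_dual_inv st" and "time st < t'"
    and crossing_ok: "\<forall>u w. crossing (advance st t') u w \<longrightarrow>
       load V (dual (advance st t')) u w \<le> opt_cost k dH atime pos u w / scale"
  shows "gd_dual_inv (advance st t')"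
proof -
  have a: "act (advance st t') = act st" and t: "time (advance st t') = t'"
    unfolding advance_def by simp_all
  note grows = dual_advance_ge[OF less_imp_le[OF \<open>time st < t'\<close>]]
  show ?thesis
  proof (rule gd_dual_invI)
    show "\<forall>S. 0 \<le> dual (advance st t') S" using dual_nonneg[OF D] grows order_trans by blast
    show "\<forall>S. dual (advance st t') S \<noteq> 0 \<longrightarrow>
        S \<noteq> {} \<and> (\<exists>A\<in>act (advance st t'). S \<subseteq> A) \<and> card S mod k \<noteq> 0"
    proof (intro allI impI)
      fix S assume "dual (advance st t') S \<noteq> 0"
      show "S \<noteq> {} \<and> (\<exists>A\<in>act (advance st t'). S \<subseteq> A) \<and> card S mod k \<noteq> 0"
      proof (cases "S \<in> act st \<and> free st S \<noteq> {}")
        case True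
        have "finite S" using act_ne_subset[OF P] True finV finite_subset by blast
        then have "card (free st S) \<noteq> 0" using True unfolding free_def by simp
        then show ?thesis
          using True card_mod_eq_card_free[OF P] act_ne_subset[OF P] unfolding a by auto
      next
        case False
        then show ?thesis using \<open>dual (advance st t') S \<noteq> 0\<close> dual_support[OF D]
          unfolding a by (auto simp: advance_def)
      qed
    qed
    show "\<forall>A\<in>act (advance st t'). \<forall>x\<in>A. \<forall>z\<in>A. hdist k dH (pos x) (pos z)
        \<le> scale * (\<Sum>S\<in>Pow V. dual (advance st t') S * path_weight A x z S)"
    proof (intro ballI)
      fix A x z assume "A \<in> act (advance st t')" "x \<in> A" "z \<in> A"
      then have "hdist k dH (pos x) (pos z) \<le> scale * (\<Sum>S\<in>Pow V. dual st S * path_weight A x z S)"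
        using hdist_le_path_weight[OF D] unfolding a by blast
      also have "\<dots> \<le> scale * (\<Sum>S\<in>Pow V. dual (advance st t') S * path_weight A x z S)"
        using grows path_weight_nonneg scale_pos
        by (intro mult_left_mono sum_mono mult_right_mono) auto
      finally show "hdist k dH (pos x) (pos z)
          \<le> scale * (\<Sum>S\<in>Pow V. dual (advance st t') S * path_weight A x z S)" .
    qed
    show "\<forall>u\<in>\<Union>(act (advance st t')). (\<Sum>S\<in>Pow V. if u \<in> S then dual (advance st t') S else 0)
        \<le> (time (advance st t') - atime u) / scale"
      unfolding a t using vertex_load_advance[OF P D less_imp_le[OF \<open>time st < t'\<close>]] by blast
    show "\<forall>u\<in>\<Union>(act (advance st t')). \<forall>w\<in>\<Union>(act (advance st t')). u \<noteq> w \<longrightarrow>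
        load V (dual (advance st t')) u w \<le> opt_cost k dH atime pos u w / scale"
    proof (intro ballI impI)
      fix u w assume u: "u \<in> \<Union>(act (advance st t'))" and w: "w \<in> \<Union>(act (advance st t'))"
        and "u \<noteq> w"
      show "load V (dual (advance st t')) u w \<le> opt_cost k dH atime pos u w / scale"
      proof (cases "crossing (advance st t') u w")
        case False
        then obtain A where A: "A \<in> act st" "u \<in> A" "w \<in> A"
          using u w unfolding a crossing_def by blast
        then show ?thesis
          using load_advance_within[OF P A \<open>u \<noteq> w\<close>] load_le_opt_cost[OF D] \<open>u \<noteq> w\<close> by auto
      qed (use crossing_ok in blast)
    qed
  qed
qed

lemma gd_invariant_step:
  assumes "gd_invariant st" and "gd_step k \<gamma> dH V atime pos (1 / scale) st st'"
  shows "gd_invariant st'"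
  using assms(2) unfolding gd_step_def scale_def[symmetric]
proof (elim disjE exE conjE bexE)
  fix v assume "v \<in> V" "v \<notin> \<Union>(act st)" "atime v = time st"
    "st' = st\<lparr>act := insert {v} (act st)\<rparr>"
  then show ?thesis
    using assms(1) gd_partition_arrival gd_dual_inv_arrival unfolding gd_invariant_def by blast
next
  fix S1 S2 u w G assume "S1 \<in> act st" "S2 \<in> act st" "S1 \<noteq> S2" "u \<in> S1" "w \<in> S2"
    "load V (dual st) u w = opt_cost k dH atime pos u w / scale"
    "\<forall>g\<in>G. g \<subseteq> free st (S1 \<union> S2) \<and> card g = k"
    "\<forall>g1\<in>G. \<forall>g2\<in>G. g1 \<noteq> g2 \<longrightarrow> g1 \<inter> g2 = {}"
    "card (free st (S1 \<union> S2) - \<Union>G) < k"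
    "st' = st\<lparr>act := insert (S1 \<union> S2) (act st - {S1, S2}), mat := mat st \<union> G\<rparr>"
  then show ?thesis
    using assms(1) gd_partition_merge gd_dual_inv_merge unfolding gd_invariant_def by meson
next
  fix t' assume t': "time st < t'"
    and st': "st' = st\<lparr>time := t', dual := (\<lambda>S. if S \<in> act st \<and> free st S \<noteq> {}
                 then dual st S + 1 / scale * (t' - time st) else dual st S)\<rparr>"
    and ok: "\<forall>u w. crossing st' u w \<longrightarrow> load V (dual st') u w \<le> opt_cost k dH atime pos u w / scale"
  have adv: "st' = advance st t'" unfolding st' advance_def ..
  have "gd_partition st'"
    using assms(1) gd_partition_cong[of st' st] unfolding gd_invariant_def adv advance_def by simp
  moreover have "gd_dual_inv st'"
    using assms(1) gd_dual_inv_advance[OF _ _ t'] ok unfolding gd_invariant_def adv by blast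
  ultimately show ?thesis unfolding gd_invariant_def ..
qed

lemma gd_invariant_reachable:
  "(gd_step k \<gamma> dH V atime pos (1 / scale))\<^sup>*\<^sup>* gd_init st \<Longrightarrow> gd_invariant st"
  by (induction rule: rtranclp_induct) (use gd_invariant_init gd_invariant_step in blast)+

lemma dual_sum_le_dual_obj:
  assumes D: "gd_dual_inv st"
  shows "(real k - 1) * (\<Sum>S\<in>Pow V. dual st S) \<le> dual_obj k V (dual st)"
  unfolding dual_obj_def sum_distrib_left
proof (rule sum_mono)
  fix S
  show "(real k - 1) * dual st S \<le> real (sur k S * (k - sur k S)) * dual st S"
  proof (cases "dual st S = 0")
    case False
    then have "1 \<le> sur k S" "sur k S < k" using dual_support[OF D] k2 unfolding sur_def by auto
    then have "k - 1 \<le> sur k S * (k - sur k S)" by (rule surplus_product_ge)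
    then have "real k - 1 \<le> real (sur k S * (k - sur k S))" using k2 by linarith
    then show ?thesis using dual_nonneg[OF D] by (simp add: mult_right_mono)
  qed simp
qed

lemma gcost_le_dual_sum:
  assumes P: "gd_partition st" and D: "gd_dual_inv st" and G: "G \<in> mat st"
  shows "gcost dH pos G \<le> real k * (scale * (2 * (\<Sum>S\<in>Pow V. dual st S)))"
proof -
  obtain A where A: "A \<in> act st" "G \<subseteq> A" and "card G = k" using group_card_active[OF P] G by blast
  then have "finite G" using k2 by (intro card_ge_0_finite) simp
  define xs where "xs = (SOME xs. distinct xs \<and> set xs = G)"
  have "\<exists>xs. distinct xs \<and> set xs = G" using finite_distinct_list[OF \<open>finite G\<close>] by blast
  then have xs: "distinct xs \<and> set xs = G" unfolding xs_def by (rule someI_ex)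
  have len: "length xs = k" using xs \<open>card G = k\<close> distinct_card by fastforce
  have in_A: "xs ! i \<in> A" if "i < k" for i using that len xs A(2) nth_mem by blast
  have "gcost dH pos G = dH (map pos xs)" unfolding gcost_def xs_def ..
  also have "\<dots> \<le> (\<Sum>i<k. hdist k dH (map pos xs ! i) (pos (xs ! 0)))"
    by (rule hmetric_le_sum_hdist[OF hm one_le_k]) (simp add: len)
  also have "\<dots> \<le> (\<Sum>i<k. scale * (2 * (\<Sum>S\<in>Pow V. dual st S)))"
  proof (rule sum_mono)
    fix i assume "i \<in> {..<k}"
    then have "hdist k dH (map pos xs ! i) (pos (xs ! 0))
        \<le> scale * (\<Sum>S\<in>Pow V. dual st S * path_weight A (xs ! i) (xs ! 0) S)"
      using hdist_le_path_weight[OF D] A(1) in_A k2 len by simp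
    also have "\<dots> \<le> scale * (\<Sum>S\<in>Pow V. 2 * dual st S)"
      using scale_pos dual_nonneg[OF D] path_weight_le_2
      by (intro mult_left_mono sum_mono) (auto simp: mult.commute mult_left_mono)
    finally show "hdist k dH (map pos xs ! i) (pos (xs ! 0)) \<le> scale * (2 * (\<Sum>S\<in>Pow V. dual st S))"
      by (simp add: sum_distrib_left)
  qed
  finally show ?thesis by simp
qed

lemma gcost_le_dual_obj:
  assumes P: "gd_partition st" and D: "gd_dual_inv st" and G: "G \<in> mat st"
  shows "gcost dH pos G \<le> scale * (4 * dual_obj k V (dual st))"
proof -
  define Y where "Y = (\<Sum>S\<in>Pow V. dual st S)"
  have "0 \<le> Y" unfolding Y_def using dual_nonneg[OF D] by (simp add: sum_nonneg)
  then have "2 * Y \<le> real k * Y" using k2 by (intro mult_right_mono) auto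
  then have "real k * (2 * Y) \<le> 4 * dual_obj k V (dual st)"
    using dual_sum_le_dual_obj[OF D] unfolding Y_def[symmetric] by (simp add: algebra_simps)
  then have "real k * (scale * (2 * Y)) \<le> scale * (4 * dual_obj k V (dual st))"
    using scale_pos by (simp add: algebra_simps)
  then show ?thesis using gcost_le_dual_sum[OF P D G] unfolding Y_def[symmetric] by linarith
qed

lemma gd_dual_feasible:
  assumes D: "gd_dual_inv st" and "\<Union>(act st) = V"
  shows "dual_feasible k \<gamma> dH V atime pos (dual st)"
  using dual_nonneg[OF D] load_le_opt_cost[OF D] assms(2)
  unfolding dual_feasible_def scale_def by auto

end


theorem lemma7:
  fixes dH :: "'x list \<Rightarrow> real" and V :: "'v set" and atime :: "'v \<Rightarrow> real"
    and pos :: "'v \<Rightarrow> 'x" and k \<gamma> :: nat and st :: "'v gd_state"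
  assumes "2 \<le> k" and "1 \<le> \<gamma>" and "\<gamma> \<le> k - 1" and "hmetric k \<gamma> dH"
    and "finite V" and "k dvd card V" and "\<forall>v\<in>V. 0 \<le> atime v"
    and "(gd_step k \<gamma> dH V atime pos (1 / (real \<gamma> * real k ^ 2)))\<^sup>*\<^sup>* gd_init st"
    and "\<Union>(mat st) = V"
  shows "(\<Sum>G\<in>mat st. gcost dH pos G)
           \<le> 4 * real \<gamma> * real (card V) * real k * dual_obj k V (dual st)
       \<and> 4 * real \<gamma> * real (card V) * real k * dual_obj k V (dual st)
           \<le> 4 * real \<gamma> * real (card V) * real k * dual_opt k \<gamma> dH V atime pos"
proof -
  interpret gd_run k \<gamma> dH V atime pos using assms(1,2,4,5) by unfold_locales
  have "gd_invariant st" using gd_invariant_reachable assms(8) unfolding scale_def .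
  then have P: "gd_partition st" and D: "gd_dual_inv st" unfolding gd_invariant_def by auto
  note group_cost = gcost_le_dual_obj[OF P D]
  have "card (\<Union>(mat st)) = k * card (mat st)"
    using group_card_active[OF P] groups_disjoint[OF P] k2 by (intro card_Union_uniform_disjoint) auto
  then have "(\<Sum>G\<in>mat st. gcost dH pos G) \<le> 4 * real \<gamma> * real (card V) * real k * dual_obj k V (dual st)"
    using sum_bounded_above[of "mat st" "gcost dH pos", OF group_cost] assms(9)
    by (simp add: scale_def power2_eq_square algebra_simps)
  moreover have "\<Union>(act st) = V"
    using act_ne_subset[OF P] matched_subset_active[OF P] assms(9) by blast
  then have "dual_obj k V (dual st) \<le> dual_opt k \<gamma> dH V atime pos"
    using k2 by (intro dual_obj_le_dual_opt[OF assms(5) _ assms(6) gd_dual_feasible[OF D]]) auto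
  ultimately show ?thesis by (simp add: mult_left_mono)
qed

end
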